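(* Let $d\ge1$, let $P$ be a probability distribution on $\{0,1\}^d$ with $P(\nu)>0$ for all $\nu$, fix $\omega\in\{0,1\}^d$, and let $\mathcal{Q}_\omega:=\{y\in\mathbb{R}^d\mid A_\omega y\le b_\omega\}$, where $A_\omega$ is the $(2^d-1)\times d$ matrix with rows indexed by $\nu\in\{0,1\}^d\setminus\{\omega\}$, $A_\omega(\nu,i)=1$ if $\nu_i\ne\omega_i$ and $0$ otherwise, and $b_\omega(\nu)=\ln(P(\nu)/P(\omega))$. Let $f_\omega(y):=\prod_{i=1}^d(1+e^{y_i})$ for $y\in\mathbb{R}^d$. Let $F\subseteq\mathcal{Q}_\omega$ be a face of positive dimension and let $\hat y$ be a point in the relative interior of $F$. Then $f_\omega(\hat y)<\max_{y\in\mathcal{Q}_\omega}f_\omega(y)$. More specifically: (1) if the gradient $\nabla f_\omega(\hat y)$ is not orthogonal to $F$, then there is $\hat z\in F$ with $f_\omega(\hat z)>f_\omega(\hat y)$; (2) if $\nabla f_\omega(\hat y)$ is orthogonal to $F$, then $f_\omega(\hat y)$ is a local minimum of $f_\omega$ restricted to $F$.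
   Context: A face of $\mathcal{Q}_\omega$ is a nonempty set of the form $\{y\in\mathcal{Q}_\omega\mid A'_\omega y=b'_\omega\}$, where $A'_\omega$, $b'_\omega$ are the submatrix and subvector of $A_\omega$, $b_\omega$ formed by the same set of rows; its dimension is $d-\mathrm{rank}(A'_\omega)$. "Orthogonal to $F$" means orthogonal to every direction in the affine hull of $F$ (i.e. to $\{u-v: u,v\in F\}$). *)

theory Defs
  imports "HOL-Analysis.Analysis"
begin

text \<open>Points of {0,1}^d are functions 'n => bool (d = CARD('n)); y in R^d is real^'n.\<close>

definition Arow :: "('n::finite \<Rightarrow> bool) \<Rightarrow> ('n \<Rightarrow> bool) \<Rightarrow> real^'n" where
  "Arow \<omega> \<nu> = (\<chi> i. if \<nu> i \<noteq> \<omega> i then 1 else 0)"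

definition bvec :: "(('n::finite \<Rightarrow> bool) \<Rightarrow> real) \<Rightarrow> ('n \<Rightarrow> bool) \<Rightarrow> ('n \<Rightarrow> bool) \<Rightarrow> real" where
  "bvec P \<omega> \<nu> = ln (P \<nu> / P \<omega>)"

definition Qom :: "(('n::finite \<Rightarrow> bool) \<Rightarrow> real) \<Rightarrow> ('n \<Rightarrow> bool) \<Rightarrow> (real^'n) set" where
  "Qom P \<omega> = {y. \<forall>\<nu>. \<nu> \<noteq> \<omega> \<longrightarrow> Arow \<omega> \<nu> \<bullet> y \<le> bvec P \<omega> \<nu>}"

definition fom :: "real^'n::finite \<Rightarrow> real" where
  "fom y = (\<Prod>i\<in>UNIV. 1 + exp (y $ i))"

definition is_face :: "(('n::finite \<Rightarrow> bool) \<Rightarrow> real) \<Rightarrow> ('n \<Rightarrow> bool) \<Rightarrow> (real^'n) set \<Rightarrow> bool" where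
  "is_face P \<omega> F \<longleftrightarrow> F \<noteq> {} \<and>
     (\<exists>S. S \<subseteq> {\<nu>. \<nu> \<noteq> \<omega>} \<and>
          F = {y \<in> Qom P \<omega>. \<forall>\<nu>\<in>S. Arow \<omega> \<nu> \<bullet> y = bvec P \<omega> \<nu>})"

definition face_dim :: "(('n::finite \<Rightarrow> bool) \<Rightarrow> real) \<Rightarrow> ('n \<Rightarrow> bool) \<Rightarrow> (real^'n) set \<Rightarrow> nat" where
  "face_dim P \<omega> F = CARD('n) -
     dim (Arow \<omega> ` {\<nu>. \<nu> \<noteq> \<omega> \<and> (\<forall>y\<in>F. Arow \<omega> \<nu> \<bullet> y = bvec P \<omega> \<nu>)})"

end

theory Submission
  imports Defs
begin

text \<open>Each factor \<open>1 + exp t\<close> of \<open>fom\<close> is strictly log-convex, so \<open>fom y\<^sup>2 < fom (y + w) * fom (y - w)\<close>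
  for \<open>w \<noteq> 0\<close>. A face of positive dimension contains two distinct points, so a relative
  interior point \<open>y\<close> of it is the midpoint of some \<open>y \<plusminus> w\<close> in the face, one of which has a
  strictly larger value; hence \<open>fom y\<close> is below the maximum over \<open>Q\<close>, which exists because
  \<open>fom\<close> is coordinatewise increasing, the rows of \<open>A\<close> differing from \<open>\<omega>\<close> in one bit bound every
  coordinate from above, and clamping coordinates from below far enough does not leave \<open>Q\<close>.
  Convexity of \<open>ln \<circ> fom\<close> along lines makes a point whose gradient is orthogonal to the face a
  minimum of \<open>fom\<close> on the face.\<close>

lemma sq_one_plus_exp_less:
  fixes a s :: real
  assumes "s \<noteq> 0"
  shows "(1 + exp a)^2 < (1 + exp (a + s)) * (1 + exp (a - s))"
proof -
  have "(1 + exp (a + s)) * (1 + exp (a - s)) - (1 + exp a)^2 = exp (a - s) * (exp s - 1)^2"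
    by (simp add: algebra_simps power2_eq_square flip: exp_add)
  also have "\<dots> > 0"
    using assms by simp
  finally show ?thesis
    by simp
qed

lemma fom_pos: "fom y > 0"
  unfolding fom_def by (intro prod_pos) (simp add: add_pos_pos)

lemma fom_mono:
  assumes "\<And>i. y $ i \<le> z $ i"
  shows "fom y \<le> fom z"
  unfolding fom_def using assms by (intro prod_mono) (auto simp: add_pos_pos less_imp_le)

lemma continuous_on_fom: "continuous_on S fom"
  unfolding fom_def by (intro continuous_intros)

lemma fom_sq_less_mult:
  fixes y w :: "real^'n::finite"
  assumes "w \<noteq> 0"
  shows "fom y ^ 2 < fom (y + w) * fom (y - w)"
proof -
  obtain j where j: "w $ j \<noteq> 0"
    using assms by (metis vec_eq_iff zero_index)
  have "fom y ^ 2 = (\<Prod>i\<in>UNIV. (1 + exp (y $ i))^2)"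
    unfolding fom_def by (simp add: prod_power_distrib)
  also have "\<dots> < (\<Prod>i\<in>UNIV. (1 + exp (y $ i + w $ i)) * (1 + exp (y $ i - w $ i)))"
  proof (rule prod_mono_strict[of j])
    show "(1 + exp (y $ j))^2 < (1 + exp (y $ j + w $ j)) * (1 + exp (y $ j - w $ j))"
      using sq_one_plus_exp_less[OF j] .
    fix i
    show "0 \<le> (1 + exp (y $ i))^2 \<and>
        (1 + exp (y $ i))^2 \<le> (1 + exp (y $ i + w $ i)) * (1 + exp (y $ i - w $ i))"
      using sq_one_plus_exp_less[of "w $ i" "y $ i"]
      by (cases "w $ i = 0") (auto simp: power2_eq_square)
    show "0 < (1 + exp (y $ i + w $ i)) * (1 + exp (y $ i - w $ i))"
      by (simp add: add_pos_pos)
  qed auto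
  also have "\<dots> = fom (y + w) * fom (y - w)"
    unfolding fom_def by (simp add: prod.distrib)
  finally show ?thesis .
qed

lemma ln_fom: "ln (fom y) = (\<Sum>i\<in>UNIV. ln (1 + exp (y $ i)))"
  unfolding fom_def by (rule ln_prod) (auto simp: add_pos_pos less_imp_neq[symmetric])

lemma logistic_mono:
  fixes x y :: real
  assumes "x \<le> y"
  shows "exp x / (1 + exp x) \<le> exp y / (1 + exp y)"
proof -
  have "exp x * (1 + exp y) \<le> exp y * (1 + exp x)"
    using assms by (simp add: algebra_simps)
  then show ?thesis
    by (simp add: divide_simps add_pos_pos)
qed

lemma convex_on_ln_fom_line: "convex_on UNIV (\<lambda>t. ln (fom (y + t *\<^sub>R w)))"
proof (rule convex_on_realI)
  define \<sigma> where "\<sigma> x = exp x / (1 + exp x)" for x :: real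
  show "((\<lambda>t. ln (fom (y + t *\<^sub>R w))) has_real_derivative
          (\<Sum>i\<in>UNIV. w $ i * \<sigma> (y $ i + t * w $ i))) (at t)" for t
    unfolding ln_fom \<sigma>_def
    by (auto intro!: derivative_eq_intros simp: add_pos_pos field_simps)
  show "(\<Sum>i\<in>UNIV. w $ i * \<sigma> (y $ i + s * w $ i)) \<le> (\<Sum>i\<in>UNIV. w $ i * \<sigma> (y $ i + t * w $ i))"
    if "s \<le> t" for s t
  proof (rule sum_mono)
    fix i
    show "w $ i * \<sigma> (y $ i + s * w $ i) \<le> w $ i * \<sigma> (y $ i + t * w $ i)"
    proof (cases "w $ i \<ge> 0")
      case True
      then show ?thesis
        using that unfolding \<sigma>_def
        by (intro mult_left_mono logistic_mono add_left_mono mult_right_mono) auto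
    next
      case False
      then show ?thesis
        using that unfolding \<sigma>_def
        by (intro mult_left_mono_neg logistic_mono add_left_mono mult_right_mono_neg) auto
    qed
  qed
qed simp

lemma convex_on_line_above_tangent:
  fixes f :: "'a::real_normed_vector \<Rightarrow> real"
  assumes convex: "convex_on UNIV (\<lambda>t. f (x + t *\<^sub>R (y - x)))"
    and deriv: "(f has_derivative f') (at x)"
  shows "f x + f' (y - x) \<le> f y"
proof -
  have "((\<lambda>t. x + t *\<^sub>R (y - x)) has_derivative (\<lambda>t. t *\<^sub>R (y - x))) (at 0)"
    by (auto intro!: derivative_eq_intros)
  from has_derivative_compose[OF this] deriv
  have "((\<lambda>t. f (x + t *\<^sub>R (y - x))) has_derivative (\<lambda>t. f' (t *\<^sub>R (y - x)))) (at 0)"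
    by simp
  moreover have "(\<lambda>t. f' (t *\<^sub>R (y - x))) = (*) (f' (y - x))"
    using has_derivative_linear[OF deriv] by (auto simp: linear_scale)
  ultimately have "((\<lambda>t. f (x + t *\<^sub>R (y - x))) has_real_derivative f' (y - x)) (at 0 within UNIV)"
    by (simp add: has_field_derivative_def)
  from convex_on_imp_above_tangent[OF convex _ _ _ this, of 1]
  show ?thesis
    by simp
qed

lemma fom_le_on_tangent_hyperplane:
  assumes grad: "(fom has_derivative (\<lambda>h. g \<bullet> h)) (at y)"
    and orth: "g \<bullet> (z - y) = 0"
  shows "fom y \<le> fom z"
proof -
  have "((\<lambda>x. ln (fom x)) has_derivative (\<lambda>h. (g \<bullet> h) / fom y)) (at y)"
    using grad fom_pos[of y] by (auto intro!: derivative_eq_intros simp: divide_inverse)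
  with convex_on_line_above_tangent[OF convex_on_ln_fom_line]
  have "ln (fom y) + (g \<bullet> (z - y)) / fom y \<le> ln (fom z)" .
  then show ?thesis
    using orth by (simp add: fom_pos)
qed

lemma rel_interior_symmetric_points:
  fixes F :: "'a::euclidean_space set"
  assumes y: "y \<in> rel_interior F" and uv: "u \<in> F" "v \<in> F" "u \<noteq> v"
  obtains w where "w \<noteq> 0" "y + w \<in> F" "y - w \<in> F"
proof -
  obtain e where "e > 0" and e: "ball y e \<inter> affine hull F \<subseteq> F" and "y \<in> F"
    using y mem_rel_interior_ball by blast
  define w where "w = (e / (2 * norm (u - v))) *\<^sub>R (u - v)"
  have "w \<noteq> 0" "norm w < e"
    using \<open>e > 0\<close> uv(3) by (auto simp: w_def)
  have hull: "y \<in> affine hull F" "u \<in> affine hull F" "v \<in> affine hull F"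
    using \<open>y \<in> F\<close> uv by (auto intro: hull_inc)
  have "y + w \<in> affine hull F" "y - w \<in> affine hull F"
    unfolding w_def
    using mem_affine_3_minus[OF affine_affine_hull hull]
      mem_affine_3_minus2[OF affine_affine_hull hull] .
  with e \<open>norm w < e\<close> have "y + w \<in> F" "y - w \<in> F"
    by (auto simp: dist_norm)
  with \<open>w \<noteq> 0\<close> show thesis
    using that by blast
qed

lemma fom_not_max_on_rel_interior:
  assumes "y \<in> rel_interior F" "u \<in> F" "v \<in> F" "u \<noteq> v"
  shows "\<exists>z\<in>F. fom y < fom z"
proof -
  obtain w where "w \<noteq> 0" "y + w \<in> F" "y - w \<in> F"
    using rel_interior_symmetric_points[OF assms] .
  moreover have "fom y * fom y < fom (y + w) * fom (y - w)"
    using fom_sq_less_mult[OF \<open>w \<noteq> 0\<close>] by (simp add: power2_eq_square)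
  then have "fom y < fom (y + w) \<or> fom y < fom (y - w)"
    using fom_pos by (meson mult_mono less_imp_le not_le)
  ultimately show ?thesis
    by blast
qed

lemma polyhedron_perturb_keeping_tight_rows:
  fixes a :: "'i \<Rightarrow> 'a::euclidean_space"
  assumes "finite I" and p: "\<forall>i\<in>I. a i \<bullet> p \<le> b i"
    and rank: "dim (a ` {i\<in>I. a i \<bullet> p = b i}) < DIM('a)"
  obtains q where "q \<noteq> p" "\<forall>i\<in>I. a i \<bullet> q \<le> b i"
    "\<forall>i\<in>I. a i \<bullet> p = b i \<longrightarrow> a i \<bullet> q = b i"
proof -
  obtain x where "x \<noteq> 0"
    and x: "\<And>z. z \<in> span (a ` {i\<in>I. a i \<bullet> p = b i}) \<Longrightarrow> orthogonal x z"
    using orthogonal_to_subspace_exists[OF rank] by blast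
  have tight: "a i \<bullet> (p + t *\<^sub>R x) = b i" if "i \<in> I" "a i \<bullet> p = b i" for i t
    using x[of "a i"] that by (simp add: span_base orthogonal_def inner_commute inner_add_right)
  have "\<forall>\<^sub>F t in at (0::real). \<forall>i\<in>{i\<in>I. a i \<bullet> p \<noteq> b i}. a i \<bullet> (p + t *\<^sub>R x) < b i"
  proof (intro eventually_ball_finite ballI)
    show "finite {i\<in>I. a i \<bullet> p \<noteq> b i}"
      using \<open>finite I\<close> by simp
    fix i assume "i \<in> {i\<in>I. a i \<bullet> p \<noteq> b i}"
    then have "a i \<bullet> p < b i"
      using p by force
    moreover have "((\<lambda>t. a i \<bullet> (p + t *\<^sub>R x)) \<longlongrightarrow> a i \<bullet> p) (at 0)"
      by (auto intro!: tendsto_eq_intros)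
    ultimately show "\<forall>\<^sub>F t in at 0. a i \<bullet> (p + t *\<^sub>R x) < b i"
      using order_tendstoD(2) by blast
  qed
  then obtain d where "d > 0" and slack: "\<And>t. 0 < dist t 0 \<Longrightarrow> dist t 0 < d \<Longrightarrow>
      \<forall>i\<in>I. a i \<bullet> p \<noteq> b i \<longrightarrow> a i \<bullet> (p + t *\<^sub>R x) < b i"
    unfolding eventually_at by auto
  show thesis
  proof (rule that[of "p + (d / 2) *\<^sub>R x"])
    show "p + (d / 2) *\<^sub>R x \<noteq> p"
      using \<open>d > 0\<close> \<open>x \<noteq> 0\<close> by simp
    show "\<forall>i\<in>I. a i \<bullet> (p + (d / 2) *\<^sub>R x) \<le> b i"
      using slack[of "d / 2"] tight \<open>d > 0\<close> by (force simp: dist_real_def)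
    show "\<forall>i\<in>I. a i \<bullet> p = b i \<longrightarrow> a i \<bullet> (p + (d / 2) *\<^sub>R x) = b i"
      using tight by blast
  qed
qed

lemma is_face_two_points:
  assumes face: "is_face P \<omega> F" and dim: "face_dim P \<omega> F > 0"
  obtains u v where "u \<in> F" "v \<in> F" "u \<noteq> v"
proof -
  obtain S where "F \<noteq> {}" "S \<subseteq> {\<nu>. \<nu> \<noteq> \<omega>}"
    and F: "F = {y \<in> Qom P \<omega>. \<forall>\<nu>\<in>S. Arow \<omega> \<nu> \<bullet> y = bvec P \<omega> \<nu>}"
    using face unfolding is_face_def by blast
  then obtain p where "p \<in> F"
    by blast
  show thesis
  proof (cases "F = {p}")
    case True
    have "p \<in> Qom P \<omega>"
      using \<open>p \<in> F\<close> F by blast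
    moreover have "dim (Arow \<omega> ` {\<nu> \<in> {\<nu>. \<nu> \<noteq> \<omega>}. Arow \<omega> \<nu> \<bullet> p = bvec P \<omega> \<nu>}) < DIM(real^'a)"
      using dim True unfolding face_dim_def by simp
    ultimately obtain q where "q \<noteq> p" "\<forall>\<nu>\<in>{\<nu>. \<nu> \<noteq> \<omega>}. Arow \<omega> \<nu> \<bullet> q \<le> bvec P \<omega> \<nu>"
      and "\<forall>\<nu>\<in>{\<nu>. \<nu> \<noteq> \<omega>}. Arow \<omega> \<nu> \<bullet> p = bvec P \<omega> \<nu> \<longrightarrow> Arow \<omega> \<nu> \<bullet> q = bvec P \<omega> \<nu>"
      using polyhedron_perturb_keeping_tight_rows[of "{\<nu>. \<nu> \<noteq> \<omega>}" "Arow \<omega>" p "bvec P \<omega>"]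
      by (auto simp: Qom_def)
    then have "q \<in> F"
      using F \<open>p \<in> F\<close> \<open>S \<subseteq> {\<nu>. \<nu> \<noteq> \<omega>}\<close> by (auto simp: Qom_def)
    with \<open>q \<noteq> p\<close> True show thesis
      by blast
  next
    case False
    with \<open>p \<in> F\<close> show thesis
      using that by blast
  qed
qed

lemma continuous_mono_attains_sup_on_clamped:
  fixes f :: "real^'n::finite \<Rightarrow> real"
  assumes "continuous_on UNIV f" and mono: "\<And>y z. (\<And>i. y $ i \<le> z $ i) \<Longrightarrow> f y \<le> f z"
    and "closed S" "S \<noteq> {}"
    and upper: "\<And>y i. y \<in> S \<Longrightarrow> y $ i \<le> u i"
    and clamp: "\<And>y. y \<in> S \<Longrightarrow> (\<chi> i. max (y $ i) L) \<in> S"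
  obtains m where "m \<in> S" "\<And>y. y \<in> S \<Longrightarrow> f y \<le> f m"
proof -
  define K where "K = S \<inter> cbox (\<chi> i. L) (\<chi> i. u i)"
  have clamp_K: "(\<chi> i. max (y $ i) L) \<in> K" if "y \<in> S" for y
    using clamp[OF that] upper[OF clamp[OF that]] by (auto simp: K_def mem_box_cart)
  have "compact K" "K \<noteq> {}"
    using \<open>closed S\<close> \<open>S \<noteq> {}\<close> clamp_K unfolding K_def by (auto intro: closed_Int_compact)
  then obtain m where "m \<in> K" and m: "\<And>y. y \<in> K \<Longrightarrow> f y \<le> f m"
    using continuous_attains_sup[of K f] continuous_on_subset[OF assms(1)] by blast
  show thesis
  proof (rule that)
    show "m \<in> S"
      using \<open>m \<in> K\<close> K_def by blast
    show "f y \<le> f m" if "y \<in> S" for y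
      using mono[of y "\<chi> i. max (y $ i) L"] m[OF clamp_K[OF that]] by simp
  qed
qed

lemma Arow_inner: "Arow \<omega> \<nu> \<bullet> y = (\<Sum>i | \<nu> i \<noteq> \<omega> i. y $ i)"
proof -
  have "Arow \<omega> \<nu> \<bullet> y = (\<Sum>i\<in>UNIV. if \<nu> i \<noteq> \<omega> i then y $ i else 0)"
    unfolding Arow_def inner_vec_def by (auto intro: sum.cong)
  then show ?thesis
    by (simp add: sum.If_cases)
qed

lemma Arow_fun_upd_inner: "Arow \<omega> (fun_upd \<omega> i (\<not> \<omega> i)) \<bullet> y = y $ i"
proof -
  have "{k. (fun_upd \<omega> i (\<not> \<omega> i)) k \<noteq> \<omega> k} = {i}"
    by auto
  then show ?thesis
    unfolding Arow_inner by simp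
qed

lemma Qom_component_le:
  assumes "y \<in> Qom P \<omega>"
  shows "y $ i \<le> bvec P \<omega> (fun_upd \<omega> i (\<not> \<omega> i))"
proof -
  have "fun_upd \<omega> i (\<not> \<omega> i) \<noteq> \<omega>"
    by (metis fun_upd_same)
  with assms show ?thesis
    unfolding Qom_def by (auto simp flip: Arow_fun_upd_inner[of \<omega> i y])
qed

lemma closed_Qom: "closed (Qom P \<omega>)"
proof -
  have "Qom P \<omega> = (\<Inter>\<nu>\<in>{\<nu>. \<nu> \<noteq> \<omega>}. {y. Arow \<omega> \<nu> \<bullet> y \<le> bvec P \<omega> \<nu>})"
    unfolding Qom_def by auto
  also have "closed \<dots>"
    by (intro closed_INT ballI closed_Collect_le continuous_intros)
  finally show ?thesis .
qed

lemma Qom_clamp: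
  fixes P :: "('n::finite \<Rightarrow> bool) \<Rightarrow> real"
  obtains L where "\<And>y. y \<in> Qom P \<omega> \<Longrightarrow> (\<chi> i. max (y $ i) L) \<in> Qom P \<omega>"
proof -
  define B where "B = (\<Sum>\<nu>\<in>UNIV. \<bar>bvec P \<omega> \<nu>\<bar>)"
  have bB: "\<bar>bvec P \<omega> \<nu>\<bar> \<le> B" for \<nu>
    unfolding B_def by (rule member_le_sum) auto
  define L where "L = - real CARD('n) * B - B - 1"
  \<comment> \<open>so negative that every row through a coordinate clamped to \<open>L\<close> is slack\<close>
  have "0 \<le> B"
    using bB[of \<omega>] by linarith
  moreover have "0 \<le> real CARD('n) * B"
    using \<open>0 \<le> B\<close> by simp
  ultimately have "L \<le> B"
    unfolding L_def by linarith
  have "Arow \<omega> \<nu> \<bullet> (\<chi> i. max (y $ i) L) \<le> bvec P \<omega> \<nu>"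
    if y: "y \<in> Qom P \<omega>" and "\<nu> \<noteq> \<omega>" for y \<nu>
  proof (cases "\<forall>i. \<nu> i \<noteq> \<omega> i \<longrightarrow> L \<le> y $ i")
    case True
    then have "Arow \<omega> \<nu> \<bullet> (\<chi> i. max (y $ i) L) = Arow \<omega> \<nu> \<bullet> y"
      unfolding Arow_inner by (intro sum.cong) auto
    with that show ?thesis
      unfolding Qom_def by auto
  next
    case False
    let ?c = "\<chi> i. max (y $ i) L"
    let ?A = "{i. \<nu> i \<noteq> \<omega> i}"
    obtain j where "j \<in> ?A" "y $ j < L"
      using False not_le by blast
    have c_le: "?c $ i \<le> B" for i
      using Qom_component_le[OF y, of i] bB[of "fun_upd \<omega> i (\<not> \<omega> i)"] \<open>L \<le> B\<close> by simp
    have "Arow \<omega> \<nu> \<bullet> ?c = ?c $ j + (\<Sum>i\<in>?A - {j}. ?c $ i)"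
      unfolding Arow_inner using \<open>j \<in> ?A\<close> by (simp add: sum.remove)
    also have "\<dots> \<le> L + real (card (?A - {j})) * B"
      using \<open>y $ j < L\<close> c_le by (intro add_mono sum_bounded_above) auto
    also have "\<dots> \<le> L + real CARD('n) * B"
      using \<open>0 \<le> B\<close> card_mono[of UNIV "?A - {j}"] by (intro add_left_mono mult_right_mono) auto
    also have "\<dots> \<le> bvec P \<omega> \<nu>"
      using bB[of \<nu>] unfolding L_def by linarith
    finally show ?thesis .
  qed
  then show thesis
    using that unfolding Qom_def by blast
qed

lemma fom_attains_max_on_Qom:
  assumes "Qom P \<omega> \<noteq> {}"
  obtains m where "m \<in> Qom P \<omega>" "\<And>y. y \<in> Qom P \<omega> \<Longrightarrow> fom y \<le> fom m"
proof -
  obtain L where L: "\<And>y. y \<in> Qom P \<omega> \<Longrightarrow> (\<chi> i. max (y $ i) L) \<in> Qom P \<omega>"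
    using Qom_clamp by blast
  show thesis
  proof (rule continuous_mono_attains_sup_on_clamped[where u = "\<lambda>i. bvec P \<omega> (fun_upd \<omega> i (\<not> \<omega> i))",
        OF continuous_on_fom _ closed_Qom assms Qom_component_le L])
    fix m assume "m \<in> Qom P \<omega>" "\<And>y. y \<in> Qom P \<omega> \<Longrightarrow> fom y \<le> fom m"
    then show thesis
      by (rule that)
  qed (rule fom_mono)
qed

theorem lemma5:
  fixes P :: "('n::finite \<Rightarrow> bool) \<Rightarrow> real"
    and \<omega> :: "'n \<Rightarrow> bool"
    and F :: "(real^'n) set"
    and yh g :: "real^'n"
  assumes Ppos: "\<And>\<nu>. P \<nu> > 0"
    and Psum: "(\<Sum>\<nu>\<in>UNIV. P \<nu>) = 1"
    and face: "is_face P \<omega> F"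
    and dimpos: "face_dim P \<omega> F > 0"
    and yh: "yh \<in> rel_interior F"
    and grad: "(fom has_derivative (\<lambda>h. g \<bullet> h)) (at yh)"
  shows "(\<exists>m\<in>Qom P \<omega>. (\<forall>y\<in>Qom P \<omega>. fom y \<le> fom m) \<and> fom yh < fom m)
       \<and> ((\<exists>u\<in>F. \<exists>v\<in>F. g \<bullet> (u - v) \<noteq> 0) \<longrightarrow> (\<exists>z\<in>F. fom z > fom yh))
       \<and> ((\<forall>u\<in>F. \<forall>v\<in>F. g \<bullet> (u - v) = 0) \<longrightarrow>
            (\<exists>e>0. \<forall>y\<in>F. dist y yh < e \<longrightarrow> fom yh \<le> fom y))"
proof -
  have "F \<subseteq> Qom P \<omega>" "yh \<in> F"
    using face yh rel_interior_subset unfolding is_face_def by blast+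
  obtain u v where "u \<in> F" "v \<in> F" "u \<noteq> v"
    using is_face_two_points[OF face dimpos] .
  then obtain z where "z \<in> F" "fom yh < fom z"
    using fom_not_max_on_rel_interior[OF yh] by blast
  obtain m where "m \<in> Qom P \<omega>" and m: "\<And>y. y \<in> Qom P \<omega> \<Longrightarrow> fom y \<le> fom m"
    using fom_attains_max_on_Qom \<open>F \<subseteq> Qom P \<omega>\<close> \<open>yh \<in> F\<close> by blast
  have "fom yh < fom m"
    using \<open>fom yh < fom z\<close> m[of z] \<open>z \<in> F\<close> \<open>F \<subseteq> Qom P \<omega>\<close> by force
  moreover have "fom yh \<le> fom y" if "\<forall>u\<in>F. \<forall>v\<in>F. g \<bullet> (u - v) = 0" "y \<in> F" for y
    using fom_le_on_tangent_hyperplane[OF grad] that \<open>yh \<in> F\<close> by blast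
  ultimately show ?thesis
    using \<open>m \<in> Qom P \<omega>\<close> m \<open>z \<in> F\<close> \<open>fom yh < fom z\<close> by (auto intro!: exI[of _ 1])
qed

end
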